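(* Let $X$ be a finite set with $n$ elements. For all functions $f,g:X\to X$, \[\deg(f\circ g)\leq\sqrt{n}\,\sqrt{\deg(f)}\,\deg(g).\] Furthermore, equality holds if and only if $f$ is a constant function and $g$ is a bijection.
   Context: For finite sets $X,Y$ and a function $f:X\to Y$, the degree of $f$ is $\deg(f)=\frac{1}{|X|}\sum_{y\in Y}|f^{-1}(y)|^2$. *)

theory Defs
  imports Complex_Main "HOL-Library.FuncSet"
begin

definition deg :: "'a set \<Rightarrow> 'b set \<Rightarrow> ('a \<Rightarrow> 'b) \<Rightarrow> real" where
  "deg X Y f = (\<Sum>y\<in>Y. (real (card {x\<in>X. f x = y}))^2) / real (card X)"

end

(* Write a(y) and b(z) for the fibre sizes of g and f.  The fibre of f \<circ> g over z has size
   the sum of a over the fibre of f over z, so Cauchy-Schwarz on each fibre of f gives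
   \<Sum>z |(f \<circ> g)\<^sup>-1 z|\<^sup>2 \<le> \<Sum>y a(y)\<^sup>2 b(f y), and b(f y) \<le> sqrt (\<Sum>z b(z)\<^sup>2) = sqrt (n deg f).
   Equality forces b(f y) = sqrt (\<Sum>z b(z)\<^sup>2) for some y, so f has a single nonempty fibre;
   then deg f = deg (f \<circ> g) = n, and equality reduces to deg g = 1, which for fibre sizes
   a(y) \<in> \<nat> with \<Sum>y a(y) = n means a(y) \<le> 1, i.e. g is injective. *)

theory Submission
  imports Defs "HOL-Analysis.Convex" "HOL-Analysis.L2_Norm"
begin

abbreviation fibre_card :: "'a set \<Rightarrow> ('a \<Rightarrow> 'b) \<Rightarrow> 'b \<Rightarrow> nat" where
  "fibre_card X h y \<equiv> card {x\<in>X. h x = y}"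

lemma sum_fibre_card_eq_card_vimage:
  assumes "finite X" and "finite S"
  shows "(\<Sum>y\<in>S. fibre_card X h y) = card {x\<in>X. h x \<in> S}"
proof -
  have "(\<Sum>y\<in>S. fibre_card X h y) = (\<Sum>y\<in>S. \<Sum>x\<in>{x\<in>{x\<in>X. h x \<in> S}. h x = y}. 1)"
    by (intro sum.cong) (auto intro: arg_cong[where f = card])
  also have "\<dots> = card {x\<in>X. h x \<in> S}"
    using assms by (subst sum.group) auto
  finally show ?thesis .
qed

lemma sum_fibre_card:
  assumes "finite X" and "finite Y" and "h \<in> X \<rightarrow> Y"
  shows "(\<Sum>y\<in>Y. fibre_card X h y) = card X"
proof -
  have "{x\<in>X. h x \<in> Y} = X"
    using assms(3) by auto
  then show ?thesis
    using assms(1,2) by (simp add: sum_fibre_card_eq_card_vimage)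
qed

lemma fibre_card_comp:
  assumes "finite X" and "finite Y" and "g \<in> X \<rightarrow> Y"
  shows "fibre_card X (f \<circ> g) z = (\<Sum>y\<in>{y\<in>Y. f y = z}. fibre_card X g y)"
  using assms by (subst sum_fibre_card_eq_card_vimage) (auto intro: arg_cong[where f = card])

lemma inj_on_iff_fibre_card_le_1:
  assumes "finite X" and "h \<in> X \<rightarrow> Y"
  shows "inj_on h X \<longleftrightarrow> (\<forall>y\<in>Y. fibre_card X h y \<le> 1)"
proof
  assume "inj_on h X"
  then show "\<forall>y\<in>Y. fibre_card X h y \<le> 1"
    using assms(1) by (auto simp: card_le_Suc0_iff_eq inj_on_def)
next
  assume le_1: "\<forall>y\<in>Y. fibre_card X h y \<le> 1"
  show "inj_on h X"
  proof (rule inj_onI)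
    fix x x' assume "x \<in> X" "x' \<in> X" "h x = h x'"
    then have "x \<in> {u\<in>X. h u = h x}" "x' \<in> {u\<in>X. h u = h x}" and "h x \<in> Y"
      using assms(2) by auto
    with le_1 show "x = x'"
      using assms(1) by (auto simp: card_le_Suc0_iff_eq)
  qed
qed

lemma sum_power2_eq_sum_iff_le_1:
  fixes m :: "'a \<Rightarrow> nat"
  assumes "finite A"
  shows "(\<Sum>a\<in>A. (m a)\<^sup>2) = (\<Sum>a\<in>A. m a) \<longleftrightarrow> (\<forall>a\<in>A. m a \<le> 1)"
proof
  assume eq: "(\<Sum>a\<in>A. (m a)\<^sup>2) = (\<Sum>a\<in>A. m a)"
  show "\<forall>a\<in>A. m a \<le> 1"
  proof (rule ccontr)
    assume "\<not> (\<forall>a\<in>A. m a \<le> 1)"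
    then have "\<exists>a\<in>A. m a < (m a)\<^sup>2"
      by (force simp: power2_eq_square)
    then have "(\<Sum>a\<in>A. m a) < (\<Sum>a\<in>A. (m a)\<^sup>2)"
      using assms by (intro sum_strict_mono_ex1) (auto simp: power2_eq_square)
    with eq show False by simp
  qed
next
  assume "\<forall>a\<in>A. m a \<le> 1"
  then have "(m a)\<^sup>2 = m a" if "a \<in> A" for a
    using that by (cases "m a") (auto simp: power2_eq_square)
  then show "(\<Sum>a\<in>A. (m a)\<^sup>2) = (\<Sum>a\<in>A. m a)"
    by (rule sum.cong[OF refl])
qed

lemma deg_eq_1_iff_inj_on:
  assumes "finite X" and "X \<noteq> {}" and "finite Y" and "h \<in> X \<rightarrow> Y"
  shows "deg X Y h = 1 \<longleftrightarrow> inj_on h X"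
proof -
  have "card X > 0" using assms(1,2) by auto
  then have "deg X Y h = 1 \<longleftrightarrow> (\<Sum>y\<in>Y. (fibre_card X h y)\<^sup>2) = (\<Sum>y\<in>Y. fibre_card X h y)"
    unfolding deg_def sum_fibre_card[OF assms(1,3,4)]
    by (auto simp flip: of_nat_power of_nat_sum)
  also have "\<dots> \<longleftrightarrow> inj_on h X"
    using assms by (simp add: sum_power2_eq_sum_iff_le_1 inj_on_iff_fibre_card_le_1)
  finally show ?thesis .
qed

lemma deg_const:
  assumes "finite Y" and "c \<in> Y" and "\<forall>x\<in>X. h x = c"
  shows "deg X Y h = card X"
proof -
  have "{x\<in>X. h x = y} = (if y = c then X else {})" for y
    using assms(3) by auto
  then have fibre: "(real (fibre_card X h y))\<^sup>2 = (if y = c then (real (card X))\<^sup>2 else 0)" for y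
    by simp
  show ?thesis
    unfolding deg_def fibre using assms(1,2) by (simp add: power2_eq_square)
qed

lemma sqrt_card_mult_sqrt_deg:
  fixes f :: "'a \<Rightarrow> 'b"
  assumes "finite Y"
  shows "sqrt (card Y) * sqrt (deg Y Z f) = sqrt (\<Sum>z\<in>Z. (real (fibre_card Y f z))\<^sup>2)"
proof (cases "Y = {}")
  case False
  with assms have "card Y > 0" by auto
  then show ?thesis
    by (simp add: deg_def real_sqrt_divide)
qed simp

lemma sqrt_sum_power2_eq_imp_eq_0:
  fixes u :: "'a \<Rightarrow> real"
  assumes "finite A" and "a \<in> A" and "u a = sqrt (\<Sum>x\<in>A. (u x)\<^sup>2)"
    and "x \<in> A" and "x \<noteq> a"
  shows "u x = 0"
proof -
  have "(u a)\<^sup>2 = (\<Sum>x\<in>A. (u x)\<^sup>2)"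
    using assms(3) by (simp add: sum_nonneg)
  also have "\<dots> = (u a)\<^sup>2 + (\<Sum>x\<in>A - {a}. (u x)\<^sup>2)"
    using assms(1,2) by (simp add: sum.remove)
  finally have "(\<Sum>x\<in>A - {a}. (u x)\<^sup>2) = 0" by simp
  then show ?thesis
    using assms(1,4,5) by (simp add: sum_nonneg_eq_0_iff)
qed

lemma sum_power2_fibre_card_comp_le:
  assumes "finite X" and "finite Y" and "finite Z" and "g \<in> X \<rightarrow> Y" and "f \<in> Y \<rightarrow> Z"
  shows "(\<Sum>z\<in>Z. (real (fibre_card X (f \<circ> g) z))\<^sup>2)
    \<le> (\<Sum>y\<in>Y. (real (fibre_card X g y))\<^sup>2 * fibre_card Y f (f y))"
proof -
  have "(real (fibre_card X (f \<circ> g) z))\<^sup>2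
      \<le> (\<Sum>y\<in>{y\<in>Y. f y = z}. (real (fibre_card X g y))\<^sup>2 * fibre_card Y f (f y))" for z
  proof -
    have "(real (fibre_card X (f \<circ> g) z))\<^sup>2 = (\<Sum>y\<in>{y\<in>Y. f y = z}. real (fibre_card X g y))\<^sup>2"
      unfolding fibre_card_comp[OF assms(1,2,4)] by simp
    also have "\<dots> \<le> (\<Sum>y\<in>{y\<in>Y. f y = z}. (real (fibre_card X g y))\<^sup>2) * fibre_card Y f z"
      by (rule sum_squared_le_sum_of_squares)
    also have "\<dots> = (\<Sum>y\<in>{y\<in>Y. f y = z}. (real (fibre_card X g y))\<^sup>2 * fibre_card Y f (f y))"
      by (simp add: sum_distrib_right)
    finally show ?thesis .
  qed
  then have "(\<Sum>z\<in>Z. (real (fibre_card X (f \<circ> g) z))\<^sup>2)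
      \<le> (\<Sum>z\<in>Z. \<Sum>y\<in>{y\<in>Y. f y = z}. (real (fibre_card X g y))\<^sup>2 * fibre_card Y f (f y))"
    by (rule sum_mono)
  also have "\<dots> = (\<Sum>y\<in>Y. (real (fibre_card X g y))\<^sup>2 * fibre_card Y f (f y))"
    using assms by (intro sum.group) auto
  finally show ?thesis .
qed

lemma sum_power2_fibre_card_comp_le_sqrt:
  assumes "finite X" and "finite Y" and "finite Z" and "g \<in> X \<rightarrow> Y" and "f \<in> Y \<rightarrow> Z"
  shows "(\<Sum>z\<in>Z. (real (fibre_card X (f \<circ> g) z))\<^sup>2)
    \<le> sqrt (\<Sum>z\<in>Z. (real (fibre_card Y f z))\<^sup>2) * (\<Sum>y\<in>Y. (real (fibre_card X g y))\<^sup>2)"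
proof -
  have "(\<Sum>z\<in>Z. (real (fibre_card X (f \<circ> g) z))\<^sup>2)
      \<le> (\<Sum>y\<in>Y. (real (fibre_card X g y))\<^sup>2 * fibre_card Y f (f y))"
    using assms by (rule sum_power2_fibre_card_comp_le)
  also have "\<dots> \<le> (\<Sum>y\<in>Y. (real (fibre_card X g y))\<^sup>2 * sqrt (\<Sum>z\<in>Z. (real (fibre_card Y f z))\<^sup>2))"
    using assms(3,5) by (intro sum_mono mult_left_mono member_le_L2_set[unfolded L2_set_def]) auto
  also have "\<dots> = sqrt (\<Sum>z\<in>Z. (real (fibre_card Y f z))\<^sup>2) * (\<Sum>y\<in>Y. (real (fibre_card X g y))\<^sup>2)"
    by (simp add: sum_distrib_right mult.commute)
  finally show ?thesis .
qed

lemma sum_power2_fibre_card_comp_eq_sqrt_imp_const: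
  assumes "finite X" and "finite Y" and "finite Z" and "g \<in> X \<rightarrow> Y" and "f \<in> Y \<rightarrow> Z"
    and "X \<noteq> {}"
    and eq: "(\<Sum>z\<in>Z. (real (fibre_card X (f \<circ> g) z))\<^sup>2)
      = sqrt (\<Sum>z\<in>Z. (real (fibre_card Y f z))\<^sup>2) * (\<Sum>y\<in>Y. (real (fibre_card X g y))\<^sup>2)"
  shows "\<exists>c. \<forall>y\<in>Y. f y = c"
proof -
  define B where "B = sqrt (\<Sum>z\<in>Z. (real (fibre_card Y f z))\<^sup>2)"
  obtain x0 where "x0 \<in> X" using assms(6) by blast
  define y0 where "y0 = g x0"
  have y0: "y0 \<in> Y" "f y0 \<in> Z"
    using \<open>x0 \<in> X\<close> assms(4,5) by (auto simp: y0_def)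
  have "fibre_card X g y0 > 0"
    using assms(1) \<open>x0 \<in> X\<close> by (auto simp: y0_def card_gt_0_iff)
  have "fibre_card Y f (f y0) = B"
  proof (rule ccontr)
    assume "fibre_card Y f (f y0) \<noteq> B"
    then have "fibre_card Y f (f y0) < B"
      using member_le_L2_set[unfolded L2_set_def, OF assms(3) y0(2), of "\<lambda>z. real (fibre_card Y f z)"]
      by (simp add: B_def)
    then have "(\<Sum>y\<in>Y. (real (fibre_card X g y))\<^sup>2 * fibre_card Y f (f y))
        < (\<Sum>y\<in>Y. (real (fibre_card X g y))\<^sup>2 * B)"
      using assms(2,3,5) y0(1) \<open>fibre_card X g y0 > 0\<close> unfolding B_def
      by (intro sum_strict_mono_ex1 ballI bexI[of _ y0] mult_left_mono mult_strict_left_mono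
          member_le_L2_set[unfolded L2_set_def]) auto
    also have "\<dots> = B * (\<Sum>y\<in>Y. (real (fibre_card X g y))\<^sup>2)"
      by (simp add: sum_distrib_left mult.commute)
    finally show False
      using sum_power2_fibre_card_comp_le[OF assms(1-5)] eq by (simp add: B_def)
  qed
  have "f y = f y0" if "y \<in> Y" for y
  proof (rule ccontr)
    assume "f y \<noteq> f y0"
    moreover have "f y \<in> Z"
      using that assms(5) by auto
    ultimately have "real (fibre_card Y f (f y)) = 0"
      using \<open>fibre_card Y f (f y0) = B\<close> unfolding B_def
      by (intro sqrt_sum_power2_eq_imp_eq_0[OF assms(3) y0(2), where u = "\<lambda>z. real (fibre_card Y f z)"])
    with that assms(2) show False by auto
  qed
  then show ?thesis by blast
qed

lemma deg_comp_le:
  assumes "finite X" and "finite Y" and "finite Z" and "g \<in> X \<rightarrow> Y" and "f \<in> Y \<rightarrow> Z"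
  shows "deg X Z (f \<circ> g) \<le> sqrt (card Y) * sqrt (deg Y Z f) * deg X Y g"
  using sum_power2_fibre_card_comp_le_sqrt[OF assms]
  unfolding sqrt_card_mult_sqrt_deg[OF assms(2)] by (simp add: deg_def divide_right_mono)

lemma deg_comp_eq_imp_const:
  assumes "finite X" and "finite Y" and "finite Z" and "g \<in> X \<rightarrow> Y" and "f \<in> Y \<rightarrow> Z"
    and "X \<noteq> {}"
    and "deg X Z (f \<circ> g) = sqrt (card Y) * sqrt (deg Y Z f) * deg X Y g"
  shows "\<exists>c. \<forall>y\<in>Y. f y = c"
proof (rule sum_power2_fibre_card_comp_eq_sqrt_imp_const[OF assms(1-6)])
  have "card X > 0" using assms(1,6) by auto
  with assms(7) show "(\<Sum>z\<in>Z. (real (fibre_card X (f \<circ> g) z))\<^sup>2)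
      = sqrt (\<Sum>z\<in>Z. (real (fibre_card Y f z))\<^sup>2) * (\<Sum>y\<in>Y. (real (fibre_card X g y))\<^sup>2)"
    unfolding sqrt_card_mult_sqrt_deg[OF assms(2)] by (simp add: deg_def)
qed

theorem mainTheorem2:
  fixes X :: "'a set" and f g :: "'a \<Rightarrow> 'a" and n :: nat
  assumes "finite X" and "X \<noteq> {}" and "card X = n"
    and "f \<in> X \<rightarrow> X" and "g \<in> X \<rightarrow> X"
  shows "deg X X (f \<circ> g) \<le> sqrt (real n) * sqrt (deg X X f) * deg X X g
    \<and> (deg X X (f \<circ> g) = sqrt (real n) * sqrt (deg X X f) * deg X X g
           \<longleftrightarrow> (\<exists>c. \<forall>x\<in>X. f x = c) \<and> bij_betw g X X)"
proof -
  have "real n > 0"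
    using assms(1-3) by auto
  have eq_iff_deg_1: "deg X X (f \<circ> g) = sqrt (real n) * sqrt (deg X X f) * deg X X g
      \<longleftrightarrow> deg X X g = 1" if "\<forall>x\<in>X. f x = c" for c
  proof -
    have "c \<in> X"
      using that assms(2,4) by auto
    then have "deg X X f = n" and "deg X X (f \<circ> g) = n"
      using that assms(3,5) by (auto intro!: deg_const[OF assms(1)])
    with \<open>real n > 0\<close> show ?thesis
      by simp
  qed
  have "bij_betw g X X \<longleftrightarrow> deg X X g = 1"
    using deg_eq_1_iff_inj_on[OF assms(1,2,1,5)] endo_inj_surj[OF assms(1)] assms(5)
    by (auto simp: bij_betw_def)
  then show ?thesis
    using deg_comp_le[OF assms(1,1,1,5,4)] deg_comp_eq_imp_const[OF assms(1,1,1,5,4,2)]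
      eq_iff_deg_1 assms(3) by blast
qed

end
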